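(* Let $G=G_{(X,I)}=(Q,A,E)$ be a $d$-dim PNS with $J=[1,d]\setminus I$. For all $p\in Q$ and $x,y\in\mathbb{N}^J$: $(p,x)\dashrightarrow^*(p,y)$ in $G$ if and only if $y-x\in(A_{SC}^G)_\Delta^*$ (i.e., $x\dashrightarrow^* y$ in the net $A_{SC}^G$). Moreover, $\|A_{SC}^G\|\leq\|A\|\cdot|Q|$.
   Context: A $d$-dim Petri net $A$ is a finite set of actions $(a_-,a_+)\in\mathbb{N}^d\times\mathbb{N}^d$, with $\Delta(a)=a_+-a_-$ and $\|A\|$ the maximal entry of all $a_-,a_+$; for an action sequence $\sigma=a_1\cdots a_k$, $\Delta(\sigma)=\sum_j\Delta(a_j)$. $A$ is conservative if some $w\in(\mathbb{N}_+)^d$ satisfies $\langle\Delta(a),w\rangle=0$ for all $a$. Steps: $x\xrightarrow{a}y$ iff $x=c+a_-$, $y=c+a_+$, $c\in\mathbb{N}^d$; a bottom SCC is a nonempty set $X$ of configurations with $\{y\mid x\xrightarrow{*}y\}=X$ for all $x\in X$. For $I\subseteq[1,d]$, $x|_I$ denotes restriction to $I$ and $A|_I$ the net with actions $((a_-)|_I,(a_+)|_I)$. A $d$-dim PNS is $G=G_{(X,I)}=(Q,A,E)$ where $A$ is a conservative $d$-dim net, $X$ a bottom SCC of $A$, $I\subseteq[1,d]$, $Q=\{x|_I\mid x\in X\}$, and $E=\{(p,a,q)\in Q\times A\times Q\mid p\xrightarrow{a}q\text{ in }A|_I\}$. Configurations of $G$ are pairs $(p,x)$, $p\in Q$, $x\in\mathbb{N}^J$.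 Virtual reachability in $G$: $(p,x)\dashrightarrow^*(q,y)$ iff there is a path from $p$ to $q$ in the labelled graph $(Q,A,E)$ labelled by some $\sigma$ with $\Delta(\sigma)|_J=y-x$. The $|J|$-dim net $A_{SC}^G$ has, for each $z$ in the set of displacements $\Delta(\sigma)|_J$ of simple cycles (labelled $\sigma$) of the graph $(Q,A,E)$, the action $(z_-,z_+)$ where $z_+=\max(z,\mathbf{0})$ and $z_-=\max(-z,\mathbf{0})$ componentwise; $(A_{SC}^G)_\Delta^*$ is the set of finite sums of these displacements $z$. *)

theory Defs
  imports Main
begin

text \<open>Coordinates [1,d] are represented by the index set {..<d} = {0,...,d-1}.
  A vector in N^D (D a set of indices) is a function nat => nat vanishing outside D.\<close>

type_synonym vec = "nat \<Rightarrow> nat"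
type_synonym zvec = "nat \<Rightarrow> int"
type_synonym action = "vec \<times> vec"

definition is_vec :: "nat set \<Rightarrow> vec \<Rightarrow> bool" where
  "is_vec D x \<longleftrightarrow> (\<forall>i. i \<notin> D \<longrightarrow> x i = 0)"

definition petri_net :: "nat \<Rightarrow> action set \<Rightarrow> bool" where
  "petri_net d A \<longleftrightarrow> finite A \<and> (\<forall>a\<in>A. is_vec {..<d} (fst a) \<and> is_vec {..<d} (snd a))"

definition delta :: "action \<Rightarrow> zvec" where
  "delta a = (\<lambda>i. int (snd a i) - int (fst a i))"

definition seq_delta :: "action list \<Rightarrow> zvec" where
  "seq_delta \<sigma> = (\<lambda>i. sum_list (map (\<lambda>a. delta a i) \<sigma>))"

definition net_norm :: "nat set \<Rightarrow> action set \<Rightarrow> nat" where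
  "net_norm D A = Max ({0} \<union> {fst a i | a i. a \<in> A \<and> i \<in> D} \<union> {snd a i | a i. a \<in> A \<and> i \<in> D})"

definition conservative :: "nat \<Rightarrow> action set \<Rightarrow> bool" where
  "conservative d A \<longleftrightarrow> (\<exists>w::nat \<Rightarrow> nat. (\<forall>i<d. 0 < w i) \<and>
      (\<forall>a\<in>A. (\<Sum>i<d. delta a i * int (w i)) = 0))"

definition step :: "nat set \<Rightarrow> vec \<Rightarrow> action \<Rightarrow> vec \<Rightarrow> bool" where
  "step D x a y \<longleftrightarrow> (\<exists>c. is_vec D c \<and> x = (\<lambda>i. c i + fst a i) \<and> y = (\<lambda>i. c i + snd a i))"

definition reach :: "nat set \<Rightarrow> action set \<Rightarrow> vec \<Rightarrow> vec \<Rightarrow> bool" where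
  "reach D A = (\<lambda>x y. \<exists>a\<in>A. step D x a y)\<^sup>*\<^sup>*"

definition bottom_scc :: "nat \<Rightarrow> action set \<Rightarrow> vec set \<Rightarrow> bool" where
  "bottom_scc d A X \<longleftrightarrow> X \<noteq> {} \<and>
     (\<forall>x\<in>X. is_vec {..<d} x \<and> {y. reach {..<d} A x y} = X)"

definition restr :: "nat set \<Rightarrow> vec \<Rightarrow> vec" where
  "restr I x = (\<lambda>i. if i \<in> I then x i else 0)"

definition restrz :: "nat set \<Rightarrow> zvec \<Rightarrow> zvec" where
  "restrz I z = (\<lambda>i. if i \<in> I then z i else 0)"

definition restr_act :: "nat set \<Rightarrow> action \<Rightarrow> action" where
  "restr_act I a = (restr I (fst a), restr I (snd a))"

definition is_pns :: "nat \<Rightarrow> action set \<Rightarrow> vec set \<Rightarrow> nat set \<Rightarrow> bool" where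
  "is_pns d A X I \<longleftrightarrow> petri_net d A \<and> conservative d A \<and> bottom_scc d A X \<and> I \<subseteq> {..<d}"

definition pns_Q :: "nat set \<Rightarrow> vec set \<Rightarrow> vec set" where
  "pns_Q I X = restr I ` X"

definition pns_E :: "action set \<Rightarrow> vec set \<Rightarrow> nat set \<Rightarrow> (vec \<times> action \<times> vec) set" where
  "pns_E A X I = {(p, a, q). p \<in> pns_Q I X \<and> a \<in> A \<and> q \<in> pns_Q I X \<and> step I p (restr_act I a) q}"

fun is_path :: "('q \<times> 'l \<times> 'q) set \<Rightarrow> 'q \<Rightarrow> ('q \<times> 'l \<times> 'q) list \<Rightarrow> 'q \<Rightarrow> bool" where
  "is_path E p [] q \<longleftrightarrow> p = q"
| "is_path E p (e # es) q \<longleftrightarrow> fst e = p \<and> e \<in> E \<and> is_path E (snd (snd e)) es q"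

definition labels :: "('q \<times> 'l \<times> 'q) list \<Rightarrow> 'l list" where
  "labels es = map (\<lambda>e. fst (snd e)) es"

definition simple_cycle :: "('q \<times> 'l \<times> 'q) set \<Rightarrow> ('q \<times> 'l \<times> 'q) list \<Rightarrow> bool" where
  "simple_cycle E es \<longleftrightarrow> es \<noteq> [] \<and> (\<exists>p. is_path E p es p) \<and> distinct (map fst es)"

definition virt_reach :: "nat \<Rightarrow> action set \<Rightarrow> vec set \<Rightarrow> nat set \<Rightarrow> vec \<times> vec \<Rightarrow> vec \<times> vec \<Rightarrow> bool" where
  "virt_reach d A X I px qy \<longleftrightarrow> (\<exists>es. is_path (pns_E A X I) (fst px) es (fst qy) \<and>
      (\<forall>i\<in>{..<d} - I. seq_delta (labels es) i = int (snd qy i) - int (snd px i)))"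

definition sc_disp :: "nat \<Rightarrow> action set \<Rightarrow> vec set \<Rightarrow> nat set \<Rightarrow> zvec set" where
  "sc_disp d A X I = {restrz ({..<d} - I) (seq_delta (labels es)) | es. simple_cycle (pns_E A X I) es}"

definition z_action :: "zvec \<Rightarrow> action" where
  "z_action z = ((\<lambda>i. nat (- z i)), (\<lambda>i. nat (z i)))"

definition A_SC :: "nat \<Rightarrow> action set \<Rightarrow> vec set \<Rightarrow> nat set \<Rightarrow> action set" where
  "A_SC d A X I = z_action ` sc_disp d A X I"

inductive_set delta_star :: "action set \<Rightarrow> zvec set" for B where
  zero: "(\<lambda>i. 0) \<in> delta_star B"
| add: "s \<in> delta_star B \<Longrightarrow> a \<in> B \<Longrightarrow> (\<lambda>i. s i + delta a i) \<in> delta_star B"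

end

theory Submission
  imports Defs
begin

text \<open>A closed walk of the control graph either is a simple cycle or splits, at a repeated
  vertex, into two shorter closed walks; so its displacement is a sum of displacements of simple
  cycles. Conversely, X being a bottom SCC, any two control states p, q are linked by real runs
  p \<rightarrow> q \<rightarrow> p whose displacements cancel, so any simple cycle can be spliced into a closed walk
  at p without changing the rest of its displacement. For the norm bound, a simple cycle has at
  most |Q| edges, each moving a coordinate by at most ||A||, and Q is finite because
  conservativity bounds every coordinate of a reachable configuration.\<close>

lemma is_path_append:
  "is_path E p (xs @ ys) q \<longleftrightarrow> (\<exists>r. is_path E p xs r \<and> is_path E r ys q)"
  by (induction xs arbitrary: p) auto

lemma is_path_edges_subset: "is_path E p es q \<Longrightarrow> set es \<subseteq> E"
  by (induction es arbitrary: p) auto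

lemma seq_delta_Nil [simp]: "seq_delta [] = (\<lambda>i. 0)"
  by (simp add: seq_delta_def)

lemma seq_delta_append [simp]: "seq_delta (xs @ ys) i = seq_delta xs i + seq_delta ys i"
  by (simp add: seq_delta_def)

lemma labels_Nil [simp]: "labels [] = []"
  by (simp add: labels_def)

lemma labels_append [simp]: "labels (xs @ ys) = labels xs @ labels ys"
  by (simp add: labels_def)

lemma path_repeated_source_split:
  assumes "is_path E p es q" and "\<not> distinct (map fst es)"
  obtains es1 cyc es3 v where "es = es1 @ cyc @ es3" and "cyc \<noteq> []" and "es3 \<noteq> []"
    and "is_path E p es1 v" and "is_path E v cyc v" and "is_path E v es3 q"
proof -
  obtain xs v ys zs where "map fst es = xs @ [v] @ ys @ [v] @ zs"
    using not_distinct_decomp[OF assms(2)] by blast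
  then obtain es1 es' where es: "es = es1 @ es'" and "map fst es' = v # ys @ v # zs"
    by (auto simp: map_eq_append_conv)
  then obtain e1 rest where es': "es' = e1 # rest" "fst e1 = v"
    and "map fst rest = ys @ v # zs"
    by (auto simp: map_eq_Cons_conv)
  then obtain es2 es'' where rest: "rest = es2 @ es''" and "map fst es'' = v # zs"
    by (auto simp: map_eq_append_conv)
  then obtain e2 es3 where "es'' = e2 # es3" "fst e2 = v"
    by (auto simp: map_eq_Cons_conv)
  with es es' rest have es: "es = es1 @ e1 # es2 @ e2 # es3" by simp
  with assms(1) \<open>fst e1 = v\<close> \<open>fst e2 = v\<close>
  have "is_path E p es1 v" "is_path E v (e1 # es2) v" "is_path E v (e2 # es3) q"
    by (auto simp: is_path_append)
  with es show thesis
    using that[of es1 "e1 # es2" "e2 # es3" v] by simp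
qed

definition simple_cycle_net :: "('q \<times> action \<times> 'q) set \<Rightarrow> nat set \<Rightarrow> action set" where
  "simple_cycle_net E J = z_action ` {restrz J (seq_delta (labels es)) | es. simple_cycle E es}"

lemma A_SC_eq_simple_cycle_net: "A_SC d A X I = simple_cycle_net (pns_E A X I) ({..<d} - I)"
  by (simp add: A_SC_def sc_disp_def simple_cycle_net_def)

lemma delta_z_action [simp]: "delta (z_action z) = z"
  by (simp add: delta_def z_action_def fun_eq_iff)

lemma delta_star_add:
  assumes "s \<in> delta_star B" and "t \<in> delta_star B"
  shows "(\<lambda>i. s i + t i) \<in> delta_star B"
  using assms(2)
proof induction
  case zero
  then show ?case using assms(1) by simp
next
  case (add t a)
  have "(\<lambda>i. (s i + t i) + delta a i) \<in> delta_star B"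
    using delta_star.add[OF add.IH add.hyps(2)] .
  then show ?case by (simp add: add.assoc)
qed

lemma delta_star_single: "a \<in> B \<Longrightarrow> delta a \<in> delta_star B"
  using delta_star.add[OF delta_star.zero] by simp

lemma closed_path_disp_in_delta_star:
  assumes "is_path E p es p"
  shows "restrz J (seq_delta (labels es)) \<in> delta_star (simple_cycle_net E J)"
  using assms
proof (induction "length es" arbitrary: es p rule: less_induct)
  case less
  show ?case
  proof (cases "distinct (map fst es)")
    case True
    show ?thesis
    proof (cases "es = []")
      case True
      then show ?thesis by (simp add: restrz_def delta_star.zero)
    next
      case False
      with \<open>distinct (map fst es)\<close> less.prems have "simple_cycle E es"
        by (auto simp: simple_cycle_def)
      then have "z_action (restrz J (seq_delta (labels es))) \<in> simple_cycle_net E J"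
        by (auto simp: simple_cycle_net_def)
      from delta_star_single[OF this] show ?thesis by simp
    qed
  next
    case False
    with less.prems obtain es1 cyc es3 v
      where es: "es = es1 @ cyc @ es3" and "cyc \<noteq> []" "es3 \<noteq> []"
      and "is_path E p es1 v" "is_path E v cyc v" "is_path E v es3 p"
      by (rule path_repeated_source_split)
    then have "is_path E p (es1 @ es3) p"
      by (auto simp: is_path_append)
    moreover have "length (es1 @ es3) < length es" "length cyc < length es"
      using es \<open>cyc \<noteq> []\<close> \<open>es3 \<noteq> []\<close> by auto
    ultimately have "restrz J (seq_delta (labels (es1 @ es3))) \<in> delta_star (simple_cycle_net E J)"
      and "restrz J (seq_delta (labels cyc)) \<in> delta_star (simple_cycle_net E J)"
      using less.hyps \<open>is_path E v cyc v\<close> by blast+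
    moreover have "restrz J (seq_delta (labels es)) = (\<lambda>i.
        restrz J (seq_delta (labels (es1 @ es3))) i + restrz J (seq_delta (labels cyc)) i)"
      by (simp add: es restrz_def fun_eq_iff)
    ultimately show ?thesis by (simp add: delta_star_add)
  qed
qed

lemma step_restr:
  assumes "step D x a y"
  shows "step I (restr I x) (restr_act I a) (restr I y)"
proof -
  from assms obtain c where "x = (\<lambda>i. c i + fst a i)" "y = (\<lambda>i. c i + snd a i)"
    by (auto simp: step_def)
  then show ?thesis
    unfolding step_def
    by (intro exI[of _ "restr I c"]) (simp add: is_vec_def restr_def restr_act_def fun_eq_iff)
qed

lemma step_delta: "step D x a y \<Longrightarrow> int (y i) - int (x i) = delta a i"
  by (auto simp: step_def delta_def)

lemma bottom_scc_reach_closed: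
  "bottom_scc d A X \<Longrightarrow> x \<in> X \<Longrightarrow> reach {..<d} A x y \<Longrightarrow> y \<in> X"
  unfolding bottom_scc_def by blast

lemma bottom_scc_reach:
  "bottom_scc d A X \<Longrightarrow> x \<in> X \<Longrightarrow> y \<in> X \<Longrightarrow> reach {..<d} A x y"
  unfolding bottom_scc_def by blast

lemma reach_imp_pns_path:
  assumes "bottom_scc d A X" "x \<in> X" "reach {..<d} A x y"
  shows "\<exists>es. is_path (pns_E A X I) (restr I x) es (restr I y) \<and>
    (\<forall>i. seq_delta (labels es) i = int (y i) - int (x i))"
  using assms(3) unfolding reach_def
proof (induction rule: rtranclp_induct)
  case base
  show ?case by (intro exI[of _ "[]"]) simp
next
  case (step y z)
  then obtain es where es: "is_path (pns_E A X I) (restr I x) es (restr I y)"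
    "\<forall>i. seq_delta (labels es) i = int (y i) - int (x i)" by blast
  from step.hyps(2) obtain a where a: "a \<in> A" "step {..<d} y a z" by blast
  have "reach {..<d} A x y" "reach {..<d} A x z"
    using step.hyps unfolding reach_def by (auto intro: rtranclp.rtrancl_into_rtrancl)
  then have "y \<in> X" "z \<in> X"
    using bottom_scc_reach_closed[OF assms(1,2)] by blast+
  then have "(restr I y, a, restr I z) \<in> pns_E A X I"
    unfolding pns_E_def pns_Q_def using a(1) step_restr[OF a(2)] by blast
  with es(1) have "is_path (pns_E A X I) (restr I x) (es @ [(restr I y, a, restr I z)]) (restr I z)"
    by (simp add: is_path_append)
  moreover have "seq_delta (labels (es @ [(restr I y, a, restr I z)])) i = int (z i) - int (x i)" for i
    using es(2) step_delta[OF a(2), of i] by (simp add: labels_def seq_delta_def)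
  ultimately show ?case by blast
qed

lemma pns_round_trip:
  assumes "bottom_scc d A X" "p \<in> pns_Q I X" "q \<in> pns_Q I X"
  obtains P1 P2 where "is_path (pns_E A X I) p P1 q" "is_path (pns_E A X I) q P2 p"
    "\<forall>i. seq_delta (labels P1) i + seq_delta (labels P2) i = 0"
proof -
  obtain x y where x: "x \<in> X" "p = restr I x" and y: "y \<in> X" "q = restr I y"
    using assms(2,3) by (auto simp: pns_Q_def)
  obtain P1 where P1: "is_path (pns_E A X I) p P1 q"
    "\<forall>i. seq_delta (labels P1) i = int (y i) - int (x i)"
    using reach_imp_pns_path[OF assms(1) x(1) bottom_scc_reach[OF assms(1) x(1) y(1)]] x y
    by blast
  obtain P2 where P2: "is_path (pns_E A X I) q P2 p"
    "\<forall>i. seq_delta (labels P2) i = int (x i) - int (y i)"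
    using reach_imp_pns_path[OF assms(1) y(1) bottom_scc_reach[OF assms(1) y(1) x(1)]] x y
    by blast
  show thesis
    by (rule that[OF P1(1) P2(1)]) (simp add: P1(2) P2(2))
qed

lemma delta_star_imp_closed_pns_path:
  assumes "bottom_scc d A X" "p \<in> pns_Q I X"
    and "s \<in> delta_star (simple_cycle_net (pns_E A X I) J)"
  shows "\<exists>es. is_path (pns_E A X I) p es p \<and> (\<forall>i\<in>J. seq_delta (labels es) i = s i)"
  using assms(3)
proof induction
  case zero
  show ?case by (intro exI[of _ "[]"]) simp
next
  case (add s a)
  then obtain W where W: "is_path (pns_E A X I) p W p" "\<forall>i\<in>J. seq_delta (labels W) i = s i"
    by blast
  from add.hyps(2) obtain C where a: "a = z_action (restrz J (seq_delta (labels C)))"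
    and "simple_cycle (pns_E A X I) C"
    unfolding simple_cycle_net_def by blast
  then obtain q where C: "is_path (pns_E A X I) q C q" and "C \<noteq> []"
    unfolding simple_cycle_def by blast
  then have "q \<in> pns_Q I X"
    by (cases C) (auto simp: pns_E_def)
  with assms(1,2) obtain P1 P2
    where P: "is_path (pns_E A X I) p P1 q" "is_path (pns_E A X I) q P2 p"
    "\<forall>i. seq_delta (labels P1) i + seq_delta (labels P2) i = 0"
    by (rule pns_round_trip)
  have "is_path (pns_E A X I) p (W @ P1 @ C @ P2) p"
    using W(1) P(1,2) C by (auto simp: is_path_append)
  moreover have "seq_delta (labels (W @ P1 @ C @ P2)) i = s i + delta a i" if "i \<in> J" for i
    using W(2) P(3) that by (simp add: a restrz_def algebra_simps)
  ultimately show ?case by blast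
qed

lemma reach_is_vec:
  assumes "petri_net d A" "reach {..<d} A x y" "is_vec {..<d} x"
  shows "is_vec {..<d} y"
  using assms(2,3) unfolding reach_def
proof (induction rule: rtranclp_induct)
  case (step y z)
  then show ?case using assms(1) by (auto simp: step_def petri_net_def is_vec_def)
qed

lemma reach_preserves_weight:
  assumes "\<forall>a\<in>A. (\<Sum>i\<in>D. delta a i * int (w i)) = 0" "reach D A x y"
  shows "(\<Sum>i\<in>D. int (y i) * int (w i)) = (\<Sum>i\<in>D. int (x i) * int (w i))"
  using assms(2) unfolding reach_def
proof (induction rule: rtranclp_induct)
  case (step y z)
  then obtain a where "a \<in> A" "step D y a z" by blast
  then have "int (z i) * int (w i) = int (y i) * int (w i) + delta a i * int (w i)" for i
    using step_delta[of D y a z i] by (simp add: algebra_simps)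
  then have "(\<Sum>i\<in>D. int (z i) * int (w i)) =
      (\<Sum>i\<in>D. int (y i) * int (w i)) + (\<Sum>i\<in>D. delta a i * int (w i))"
    by (simp add: sum.distrib)
  with assms(1) \<open>a \<in> A\<close> step.IH show ?case by simp
qed simp

lemma finite_reach_conservative:
  assumes "petri_net d A" "conservative d A" "is_vec {..<d} x"
  shows "finite {y. reach {..<d} A x y}"
proof -
  obtain w where w: "\<forall>i<d. 0 < w i" "\<forall>a\<in>A. (\<Sum>i<d. delta a i * int (w i)) = 0"
    using assms(2) unfolding conservative_def by blast
  define W where "W = nat (\<Sum>i<d. int (x i) * int (w i))"
  have "{y. reach {..<d} A x y} \<subseteq> {y. \<forall>i. (i \<in> {..<d} \<longrightarrow> y i \<in> {..W}) \<and> (i \<notin> {..<d} \<longrightarrow> y i = 0)}"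
  proof (intro subsetI CollectI allI conjI impI)
    fix y i assume "y \<in> {y. reach {..<d} A x y}"
    then have r: "reach {..<d} A x y" by simp
    show "i \<notin> {..<d} \<Longrightarrow> y i = 0"
      using reach_is_vec[OF assms(1) r assms(3)] by (simp add: is_vec_def)
    assume "i \<in> {..<d}"
    then have "int (y i) \<le> int (y i) * int (w i)"
      using w(1) by (simp add: mult_le_cancel_left1 Suc_le_eq)
    also have "\<dots> \<le> (\<Sum>j<d. int (y j) * int (w j))"
      using \<open>i \<in> {..<d}\<close> by (intro member_le_sum) auto
    also have "\<dots> = (\<Sum>j<d. int (x j) * int (w j))"
      using reach_preserves_weight[OF w(2) r] .
    finally show "y i \<in> {..W}" unfolding W_def by simp
  qed
  then show ?thesis
    by (rule finite_subset) (intro finite_set_of_finite_funs; simp)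
qed

lemma finite_pns_Q: "is_pns d A X I \<Longrightarrow> finite (pns_Q I X)"
  unfolding is_pns_def pns_Q_def bottom_scc_def
  using finite_reach_conservative by fastforce

lemma seq_delta_abs_le:
  assumes "\<forall>a\<in>set \<sigma>. \<bar>delta a i\<bar> \<le> int N"
  shows "\<bar>seq_delta \<sigma> i\<bar> \<le> int (length \<sigma> * N)"
  using assms
proof (induction \<sigma>)
  case (Cons a \<sigma>)
  have "\<bar>seq_delta (a # \<sigma>) i\<bar> \<le> \<bar>delta a i\<bar> + \<bar>seq_delta \<sigma> i\<bar>"
    by (simp add: seq_delta_def abs_triangle_ineq)
  with Cons show ?case by simp
qed simp

lemma simple_cycle_length_le_card:
  assumes "simple_cycle E es" "finite V" "fst ` E \<subseteq> V"
  shows "length es \<le> card V"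
proof -
  from assms(1) obtain p where "is_path E p es p" "distinct (map fst es)"
    unfolding simple_cycle_def by blast
  then have "set (map fst es) \<subseteq> V"
    using is_path_edges_subset assms(3) by (metis image_mono order_trans set_map)
  have "length es = card (set (map fst es))"
    using distinct_card[OF \<open>distinct (map fst es)\<close>] by simp
  also have "\<dots> \<le> card V"
    using card_mono[OF assms(2) \<open>set (map fst es) \<subseteq> V\<close>] .
  finally show ?thesis .
qed

lemma net_norm_ge:
  assumes "finite B" "finite D" "a \<in> B" "i \<in> D"
  shows "fst a i \<le> net_norm D B" and "snd a i \<le> net_norm D B"
proof -
  have entries: "{f a i | a i. a \<in> B \<and> i \<in> D} = (\<lambda>(a, i). f a i) ` (B \<times> D)"
    for f :: "action \<Rightarrow> vec"
    by auto
  have fin: "finite ({0} \<union> {fst a i | a i. a \<in> B \<and> i \<in> D} \<union> {snd a i | a i. a \<in> B \<and> i \<in> D})"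
    unfolding entries[of fst] entries[of snd] using assms(1,2) by simp
  show "fst a i \<le> net_norm D B" "snd a i \<le> net_norm D B"
    unfolding net_norm_def by (rule Max_ge[OF fin]; use assms(3,4) in blast)+
qed

lemma abs_delta_le_net_norm:
  assumes "finite B" "finite D" "a \<in> B" "i \<in> D"
  shows "\<bar>delta a i\<bar> \<le> int (net_norm D B)"
  using net_norm_ge[OF assms] by (simp add: delta_def)

lemma net_norm_le:
  assumes "\<forall>a\<in>B. \<forall>i\<in>D. fst a i \<le> K \<and> snd a i \<le> K"
  shows "net_norm D B \<le> K"
proof -
  let ?S = "{0} \<union> {fst a i | a i. a \<in> B \<and> i \<in> D} \<union> {snd a i | a i. a \<in> B \<and> i \<in> D}"
  have bounded: "?S \<subseteq> {..K}"
    using assms by force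
  moreover have "finite ?S"
    using bounded by (rule finite_subset) simp
  ultimately have "Max ?S \<in> {..K}"
    by (intro subsetD[OF bounded] Max_in) auto
  then show ?thesis
    unfolding net_norm_def by simp
qed

lemma net_norm_simple_cycle_net_le:
  assumes "finite V" and "\<forall>(p, a, q)\<in>E. p \<in> V \<and> (\<forall>i\<in>J. \<bar>delta a i\<bar> \<le> int N)"
  shows "net_norm J (simple_cycle_net E J) \<le> N * card V"
proof (rule net_norm_le, intro ballI)
  fix b i assume "b \<in> simple_cycle_net E J" "i \<in> J"
  then obtain es where b: "b = z_action (restrz J (seq_delta (labels es)))"
    and es: "simple_cycle E es"
    unfolding simple_cycle_net_def by blast
  from es obtain p where "is_path E p es p"
    unfolding simple_cycle_def by blast
  then have "set es \<subseteq> E"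
    by (rule is_path_edges_subset)
  have "\<bar>delta a i\<bar> \<le> int N" if "a \<in> set (labels es)" for a
  proof -
    from that obtain p q where "(p, a, q) \<in> E"
      using \<open>set es \<subseteq> E\<close> by (force simp: labels_def)
    with assms(2) \<open>i \<in> J\<close> show ?thesis by blast
  qed
  then have disp: "\<bar>seq_delta (labels es) i\<bar> \<le> int (length es * N)"
    using seq_delta_abs_le[of "labels es" i N] by (simp add: labels_def)
  have "length es \<le> card V"
    using simple_cycle_length_le_card[OF es assms(1)] assms(2) by fastforce
  then have "int (length es * N) \<le> int (N * card V)"
    by (metis mult.commute mult_le_mono1 of_nat_le_iff)
  with disp have "\<bar>restrz J (seq_delta (labels es)) i\<bar> \<le> int (N * card V)"
    using \<open>i \<in> J\<close> by (simp add: restrz_def)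
  then show "fst b i \<le> N * card V \<and> snd b i \<le> N * card V"
    unfolding b z_action_def by (simp add: nat_le_iff abs_le_iff)
qed

theorem proposition15:
  fixes d :: nat and A :: "action set" and X :: "vec set" and I :: "nat set"
  assumes "is_pns d A X I"
  shows "(\<forall>p\<in>pns_Q I X. \<forall>x y. is_vec ({..<d} - I) x \<longrightarrow> is_vec ({..<d} - I) y \<longrightarrow>
            (virt_reach d A X I (p, x) (p, y) \<longleftrightarrow>
             (\<lambda>i. int (y i) - int (x i)) \<in> delta_star (A_SC d A X I)))
         \<and> net_norm ({..<d} - I) (A_SC d A X I) \<le> net_norm {..<d} A * card (pns_Q I X)"
proof (intro conjI ballI allI impI)
  let ?J = "{..<d} - I"
  fix p x y assume p: "p \<in> pns_Q I X" and "is_vec ?J x" "is_vec ?J y"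
  then have disp: "(\<forall>i\<in>?J. z i = int (y i) - int (x i)) \<longleftrightarrow>
      restrz ?J z = (\<lambda>i. int (y i) - int (x i))" for z
    by (auto simp: restrz_def is_vec_def fun_eq_iff)
  have "bottom_scc d A X"
    using assms by (simp add: is_pns_def)
  show "virt_reach d A X I (p, x) (p, y) \<longleftrightarrow>
      (\<lambda>i. int (y i) - int (x i)) \<in> delta_star (A_SC d A X I)"
  proof
    assume "virt_reach d A X I (p, x) (p, y)"
    then obtain es where es: "is_path (pns_E A X I) p es p"
      and "\<forall>i\<in>?J. seq_delta (labels es) i = int (y i) - int (x i)"
      unfolding virt_reach_def by auto
    then have "restrz ?J (seq_delta (labels es)) = (\<lambda>i. int (y i) - int (x i))"
      using disp by blast
    with closed_path_disp_in_delta_star[OF es, of ?J]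
    show "(\<lambda>i. int (y i) - int (x i)) \<in> delta_star (A_SC d A X I)"
      unfolding A_SC_eq_simple_cycle_net by simp
  next
    assume "(\<lambda>i. int (y i) - int (x i)) \<in> delta_star (A_SC d A X I)"
    then show "virt_reach d A X I (p, x) (p, y)"
      unfolding virt_reach_def A_SC_eq_simple_cycle_net
      using delta_star_imp_closed_pns_path[OF \<open>bottom_scc d A X\<close> p] by auto
  qed
next
  have "finite A"
    using assms by (simp add: is_pns_def petri_net_def)
  then have "\<forall>(p, a, q)\<in>pns_E A X I. p \<in> pns_Q I X \<and>
      (\<forall>i\<in>{..<d} - I. \<bar>delta a i\<bar> \<le> int (net_norm {..<d} A))"
    by (auto simp: pns_E_def intro: abs_delta_le_net_norm)
  then show "net_norm ({..<d} - I) (A_SC d A X I) \<le> net_norm {..<d} A * card (pns_Q I X)"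
    unfolding A_SC_eq_simple_cycle_net
    by (rule net_norm_simple_cycle_net_le[OF finite_pns_Q[OF assms]])
qed

end
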